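(* Let $\tau=k^{-7}$ and $t=\frac{1}{\tau^2}\big(3\ln(1/\tau)+\ln R\big)+\lceil 4k^2\ln k\rceil\cdot\big\lceil\frac4{\tau^2}\ln(1/\tau)\big\rceil$. Let $h(\vec y)=\mathrm{sgn}(\sum_{i\in[k]}\langle\vec w_i,\vec y_i\rangle-\theta)$ be a halfspace on $\{0,1\}^{kR}$ and let $r\in[k]$ be such that $|C_\tau(\vec w_r)|>t$. Define $\tilde h(\vec y)=\mathrm{sgn}(\sum_{i\in[k]}\langle\tilde{\vec w}_i,\vec y_i\rangle-\theta)$ where $\tilde{\vec w}_r=\mathrm{truncate}(\vec w_r,B_t(\vec w_r))$ and $\tilde{\vec w}_i=\vec w_i$ for $i\neq r$. Then for each $b\in\{0,1\}$, $$\Big|\mathbb E_{\tilde{\mathcal D}_b^R}[\tilde h(\vec y)]-\mathbb E_{\tilde{\mathcal D}_b^R}[h(\vec y)]\Big|\le\frac1{k^2}.$$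
   Context: $\mathrm{sgn}(t)=1$ if $t\ge0$, else $0$. Fix integers $k\ge2$, $R\ge1$ and any distributions $\mathcal D_0,\mathcal D_1$ on $\{0,1\}^k$. Points $\vec y\in\{0,1\}^{kR}$ are $k\times R$ matrices with rows $\vec y_i\in\{0,1\}^R$. $\tilde{\mathcal D}_b^R$: draw the $R$ columns of $\vec x$ independently from $\mathcal D_b$, then independently for each entry set $y_i^{(j)}=x_i^{(j)}$ w.p. $1-1/k^2$ and a fresh uniform bit w.p. $1/k^2$. For $\vec u\in\mathbb R^n$ order indices $i_1,\dots,i_n$ by decreasing $|u^{(i)}|$ (ties by increasing index); $B_t(\vec u)=\{i_1,\dots,i_{\min(t,n)}\}$; $\sigma_m^2=\sum_{j\ge m}|u^{(i_j)}|^2$; the $\tau$-critical index $c_\tau(\vec u)$ is the smallest $m$ with $|u^{(i_m)}|\le\tau\sigma_m$ ($+\infty$ if none); $C_\tau(\vec u)=\{i_1,\dots,i_{c_\tau(\vec u)-1}\}$ if $c_\tau<\infty$, and $[n]$ otherwise. $\mathrm{truncate}(\vec u,S)$ is the vector agreeing with $\vec u$ on coordinates in $S$ and equal to $0$ elsewhere. *)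

theory Defs
  imports "HOL-Probability.Probability"
begin

definition sgn01 :: "real \<Rightarrow> real" where
  "sgn01 t = (if t \<ge> 0 then 1 else 0)"

text \<open>Vectors u in R^n are functions nat => real, only indices < n matter.
  Index order i_1,...,i_n: decreasing |u i|, ties by increasing index
  (sort_key is a stable sort, applied to [0..<n]). Here 0-indexed list.\<close>
definition idx_order :: "nat \<Rightarrow> (nat \<Rightarrow> real) \<Rightarrow> nat list" where
  "idx_order n u = sort_key (\<lambda>i. - \<bar>u i\<bar>) [0..<n]"

definition Bset :: "nat \<Rightarrow> nat \<Rightarrow> (nat \<Rightarrow> real) \<Rightarrow> nat set" where
  "Bset t n u = set (take t (idx_order n u))"

text \<open>sigma_m (1-indexed m): sqrt of sum_{j >= m} |u(i_j)|^2\<close>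
definition sigma_m :: "nat \<Rightarrow> (nat \<Rightarrow> real) \<Rightarrow> nat \<Rightarrow> real" where
  "sigma_m n u m = sqrt (\<Sum>j\<in>{m - 1..<n}. (u (idx_order n u ! j))\<^sup>2)"

definition crit_cond :: "real \<Rightarrow> nat \<Rightarrow> (nat \<Rightarrow> real) \<Rightarrow> nat \<Rightarrow> bool" where
  "crit_cond \<tau> n u m \<longleftrightarrow> m \<in> {1..n} \<and> \<bar>u (idx_order n u ! (m - 1))\<bar> \<le> \<tau> * sigma_m n u m"

definition Cset :: "real \<Rightarrow> nat \<Rightarrow> (nat \<Rightarrow> real) \<Rightarrow> nat set" where
  "Cset \<tau> n u = (if \<exists>m. crit_cond \<tau> n u m
      then set (take ((LEAST m. crit_cond \<tau> n u m) - 1) (idx_order n u))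
      else {..<n})"

definition truncate :: "(nat \<Rightarrow> real) \<Rightarrow> nat set \<Rightarrow> (nat \<Rightarrow> real)" where
  "truncate u S = (\<lambda>i. if i \<in> S then u i else 0)"

definition noise_bit :: "nat \<Rightarrow> bool \<Rightarrow> bool pmf" where
  "noise_bit k b = do { flip \<leftarrow> bernoulli_pmf (1 / (real k)\<^sup>2);
                        if flip then bernoulli_pmf (1/2) else return_pmf b }"

text \<open>Noisy distribution tilde D^R: y i j is row i (< k), column j (< R).
  Columns x^(j) (a function nat => bool, coordinates < k) drawn i.i.d. from D.\<close>
definition noisyD :: "nat \<Rightarrow> nat \<Rightarrow> (nat \<Rightarrow> bool) pmf \<Rightarrow> (nat \<Rightarrow> nat \<Rightarrow> bool) pmf" where
  "noisyD k R D = do {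
     X \<leftarrow> Pi_pmf {..<R} (\<lambda>_. False) (\<lambda>_. D);
     Y \<leftarrow> Pi_pmf ({..<k} \<times> {..<R}) False (\<lambda>(i,j). noise_bit k (X j i));
     return_pmf (\<lambda>i j. Y (i, j)) }"

definition halfspace :: "nat \<Rightarrow> nat \<Rightarrow> (nat \<Rightarrow> nat \<Rightarrow> real) \<Rightarrow> real \<Rightarrow> (nat \<Rightarrow> nat \<Rightarrow> bool) \<Rightarrow> real" where
  "halfspace k R w \<theta> y = sgn01 ((\<Sum>i<k. \<Sum>j<R. w i j * (if y i j then 1 else 0)) - \<theta>)"

definition tau_k :: "nat \<Rightarrow> real" where
  "tau_k k = 1 / (real k) ^ 7"

definition t_param :: "nat \<Rightarrow> nat \<Rightarrow> real" where
  "t_param k R = (1 / (tau_k k)\<^sup>2) * (3 * ln (1 / tau_k k) + ln (real R))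
     + real_of_int (\<lceil>4 * (real k)\<^sup>2 * ln (real k)\<rceil>) * real_of_int (\<lceil>(4 / (tau_k k)\<^sup>2) * ln (1 / tau_k k)\<rceil>)"

end

theory Submission
  imports Defs
begin

text \<open>
  Let \<open>u = w r\<close>, let \<open>T = \<lceil>t\<rceil>\<close> and let \<open>B = B_T(u)\<close>.  The two halfspaces can only
  disagree at a point \<open>y\<close> when the truncated linear form lies within the discarded tail mass
  \<open>\<Delta> = \<Sum>_{j \<notin> B} |u_j|\<close> of the threshold.  Because the critical index of \<open>u\<close> exceeds \<open>t\<close>,
  the squared tail of \<open>u\<close> (in sorted order) shrinks by a factor \<open>1 - \<tau>\<^sup>2\<close> at every one of the first
  \<open>T\<close> positions.  Sampling every \<open>Lb\<close>-th of these positions gives \<open>M \<approx> 4 k\<^sup>2 ln k\<close> coordinates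
  \<open>p_0, ..., p_(M-1)\<close> of \<open>B\<close> forming a super-decreasing sequence: each \<open>|u_(p_j)|\<close> exceeds the sum of
  the later ones plus \<open>2\<Delta>\<close>.  Hence, among disagreement points that agree off these \<open>M\<close> coordinates,
  the bits at these coordinates are uniquely determined.  Under the noisy distribution every bit
  has conditional probability at most \<open>1 - 1/(2k\<^sup>2)\<close> of taking any fixed value, so the disagreement
  event has probability at most \<open>(1 - 1/(2k\<^sup>2))^M \<le> 1/k\<^sup>2\<close>, which bounds the difference of expectations.
\<close>

lemma measure_bind_pmf_le:
  fixes N :: "'a \<Rightarrow> 'b pmf"
  assumes "\<And>x. x \<in> set_pmf M \<Longrightarrow> measure (N x) X \<le> c" and "c \<ge> 0"
  shows "measure (bind_pmf M N) X \<le> c"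
proof -
  have "emeasure (bind_pmf M N) X = (\<integral>\<^sup>+x. emeasure (N x) X \<partial>M)" by simp
  also have "\<dots> \<le> (\<integral>\<^sup>+x. ennreal c \<partial>M)"
    using assms(1) by (intro nn_integral_mono_AE AE_pmfI) (simp add: measure_pmf.emeasure_eq_measure ennreal_leI)
  also have "\<dots> = ennreal c" by (simp add: measure_pmf.emeasure_space_1)
  finally show ?thesis using assms(2) by (simp add: measure_pmf.emeasure_eq_measure)
qed

text \<open>If the values on \<open>L\<close> of all functions in \<open>S\<close> (within the support) coincide, then
  \<open>S\<close> has at most one point of positive mass, whose probability is at most \<open>c^|L|\<close> when every
  factor assigns probability at most \<open>c\<close> to each value.\<close>
lemma measure_Pi_pmf_le_if_determined_on:
  fixes P :: "'a \<Rightarrow> 'b pmf"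
  assumes finL: "finite L" and c0: "c \<ge> 0" and pmf_le: "\<And>l v. l \<in> L \<Longrightarrow> pmf (P l) v \<le> c"
    and determined: "\<And>g g' l. g \<in> S \<Longrightarrow> g' \<in> S \<Longrightarrow> g \<in> set_pmf (Pi_pmf L d P)
                        \<Longrightarrow> g' \<in> set_pmf (Pi_pmf L d P) \<Longrightarrow> l \<in> L \<Longrightarrow> g l = g' l"
  shows "measure (Pi_pmf L d P) S \<le> c ^ card L"
proof (cases "S \<inter> set_pmf (Pi_pmf L d P) = {}")
  case False
  then obtain g0 where g0: "g0 \<in> S" "g0 \<in> set_pmf (Pi_pmf L d P)" by blast
  have "S \<inter> set_pmf (Pi_pmf L d P) \<subseteq> {g0}"
  proof
    fix g assume g: "g \<in> S \<inter> set_pmf (Pi_pmf L d P)"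
    have "g l = g0 l" for l
    proof (cases "l \<in> L")
      case False
      then show ?thesis using g g0(2) set_Pi_pmf_subset[OF finL, of d P] by blast
    qed (use g g0 determined in blast)
    then show "g \<in> {g0}" by auto
  qed
  then have "measure (Pi_pmf L d P) S \<le> measure (Pi_pmf L d P) {g0}"
    by (subst measure_Int_set_pmf[symmetric]) (intro measure_pmf.finite_measure_mono, auto)
  also have "\<dots> = pmf (Pi_pmf L d P) g0" by (simp add: measure_pmf_single)
  also have "\<dots> \<le> (\<Prod>x\<in>L. pmf (P x) (g0 x))"
    by (subst pmf_Pi[OF finL]) (auto intro: prod_nonneg)
  also have "\<dots> \<le> (\<Prod>x\<in>L. c)"
    by (intro prod_mono) (auto simp: pmf_le)
  finally show ?thesis by simp
qed (use c0 in \<open>simp add: measure_Int_set_pmf[symmetric]\<close>)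

text \<open>Conditioning on the coordinates outside \<open>L\<close>: an event inside which the coordinates in \<open>L\<close>
  are determined by the remaining ones has product probability at most \<open>c^|L|\<close>.\<close>
lemma measure_Pi_pmf_le_if_determined:
  fixes P :: "'a \<Rightarrow> 'b pmf"
  assumes fin: "finite I" and LI: "L \<subseteq> I" and c0: "c \<ge> 0"
    and pmf_le: "\<And>l v. l \<in> L \<Longrightarrow> pmf (P l) v \<le> c"
    and determined: "\<And>Y1 Y2 l. Y1 \<in> E \<Longrightarrow> Y2 \<in> E \<Longrightarrow> (\<forall>i. i \<notin> L \<longrightarrow> Y1 i = Y2 i)
                       \<Longrightarrow> l \<in> L \<Longrightarrow> Y1 l = Y2 l"
  shows "measure (Pi_pmf I d P) E \<le> c ^ card L"
proof -
  have finL: "finite L" using fin LI finite_subset by blast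
  let ?glue = "\<lambda>(f, g) x. if x \<in> I - L then f x else g x"
  have split_I: "I = (I - L) \<union> L" using LI by blast
  have "Pi_pmf I d P = map_pmf ?glue (pair_pmf (Pi_pmf (I - L) d P) (Pi_pmf L d P))"
    by (subst split_I, rule Pi_pmf_union) (use fin finL in auto)
  hence "measure (Pi_pmf I d P) E = measure (pair_pmf (Pi_pmf (I - L) d P) (Pi_pmf L d P)) (?glue -` E)"
    by simp
  also have "\<dots> = measure (bind_pmf (Pi_pmf (I - L) d P) (\<lambda>f. map_pmf (Pair f) (Pi_pmf L d P)))
                            (?glue -` E)"
    by (simp add: pair_pmf_def map_pmf_def)
  also have "\<dots> \<le> c ^ card L"
  proof (rule measure_bind_pmf_le)
    fix f
    have "measure (Pi_pmf L d P) {g. ?glue (f, g) \<in> E} \<le> c ^ card L"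
    proof (rule measure_Pi_pmf_le_if_determined_on[OF finL c0 pmf_le])
      fix g g' l assume "g \<in> {g. ?glue (f, g) \<in> E}" "g' \<in> {g. ?glue (f, g) \<in> E}" "l \<in> L"
        and "g \<in> set_pmf (Pi_pmf L d P)" "g' \<in> set_pmf (Pi_pmf L d P)"
      moreover have "g i = g' i" if "i \<notin> L" for i
        using that \<open>g \<in> set_pmf _\<close> \<open>g' \<in> set_pmf _\<close> set_Pi_pmf_subset[OF finL, of d P] by blast
      ultimately have "?glue (f, g) l = ?glue (f, g') l" by (intro determined) auto
      then show "g l = g' l" using \<open>l \<in> L\<close> by simp
    qed
    then show "measure (map_pmf (Pair f) (Pi_pmf L d P)) (?glue -` E) \<le> c ^ card L"
      by (simp add: vimage_def)
  qed (use c0 in simp)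
  finally show ?thesis .
qed

lemma pmf_noise_bit_le:
  assumes "k \<ge> 1"
  shows "pmf (noise_bit k b) v \<le> 1 - 1 / (2 * (real k)\<^sup>2)"
proof -
  have q: "0 \<le> 1 / (real k)\<^sup>2" "1 / (real k)\<^sup>2 \<le> 1" using assms by auto
  have "pmf (noise_bit k b) v = (1/2) * (1 / (real k)\<^sup>2) + of_bool (v = b) * (1 - 1 / (real k)\<^sup>2)"
    unfolding noise_bit_def pmf_bind using q by (simp add: indicator_def)
  also have "\<dots> \<le> (1/2) * (1 / (real k)\<^sup>2) + 1 * (1 - 1 / (real k)\<^sup>2)"
    using q by (intro add_left_mono mult_right_mono) auto
  finally show ?thesis by simp
qed

text \<open>The same bound for the noisy distribution: conditionally on the clean sample, all entries are
  independent noisy bits.\<close>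
lemma measure_noisyD_le_if_determined:
  fixes E :: "(nat \<Rightarrow> nat \<Rightarrow> bool) set"
  assumes "k \<ge> 1" and L_box: "L \<subseteq> {..<k} \<times> {..<R}"
    and determined: "\<And>y1 y2 i j. y1 \<in> E \<Longrightarrow> y2 \<in> E \<Longrightarrow> (\<forall>i j. (i, j) \<notin> L \<longrightarrow> y1 i j = y2 i j)
                        \<Longrightarrow> (i, j) \<in> L \<Longrightarrow> y1 i j = y2 i j"
  shows "measure (noisyD k R D) E \<le> (1 - 1 / (2 * (real k)\<^sup>2)) ^ card L"
  unfolding noisyD_def
proof (rule measure_bind_pmf_le)
  let ?c = "1 - 1 / (2 * (real k)\<^sup>2)"
  have "1 \<le> (real k)\<^sup>2" by (rule one_le_power) (use assms(1) in simp)
  then have c0: "0 \<le> ?c" by (simp add: divide_le_eq)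
  then show "0 \<le> ?c ^ card L" by simp
  fix X :: "nat \<Rightarrow> nat \<Rightarrow> bool"
  let ?P = "\<lambda>(i, j). noise_bit k (X j i)"
  let ?uncurry = "\<lambda>Y i j. Y (i, j) :: bool"
  have "measure (Pi_pmf ({..<k} \<times> {..<R}) False ?P) (?uncurry -` E) \<le> ?c ^ card L"
  proof (rule measure_Pi_pmf_le_if_determined[OF _ L_box c0])
    show "pmf (?P l) v \<le> ?c" for l v
      using pmf_noise_bit_le[OF assms(1)] by (simp add: case_prod_unfold)
    show "Y1 l = Y2 l" if "Y1 \<in> ?uncurry -` E" "Y2 \<in> ?uncurry -` E"
      and "\<forall>i. i \<notin> L \<longrightarrow> Y1 i = Y2 i" and "l \<in> L" for Y1 Y2 l
      using determined[of "?uncurry Y1" "?uncurry Y2" "fst l" "snd l"] that by simp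
  qed simp
  then show "measure (bind_pmf (Pi_pmf ({..<k} \<times> {..<R}) False ?P) (\<lambda>Y. return_pmf (?uncurry Y))) E
               \<le> ?c ^ card L"
    by (simp add: map_pmf_def[symmetric])
qed

lemma expectation_diff_le_disagreement:
  fixes f g :: "'a \<Rightarrow> real"
  assumes "\<And>x. f x \<in> {0, 1}" and "\<And>x. g x \<in> {0, 1}"
  shows "\<bar>measure_pmf.expectation p f - measure_pmf.expectation p g\<bar> \<le> measure p {x. f x \<noteq> g x}"
proof -
  have bounded: "integrable (measure_pmf p) h" if "\<And>x. h x \<in> {0, 1}" for h :: "'a \<Rightarrow> real"
  proof (rule measure_pmf.integrable_const_bound[of _ 1])
    have "\<bar>h x\<bar> \<le> 1" for x using that[of x] by auto
    then show "AE x in measure_pmf p. norm (h x) \<le> 1" by simp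
  qed simp
  have "\<bar>measure_pmf.expectation p f - measure_pmf.expectation p g\<bar>
          = \<bar>measure_pmf.expectation p (\<lambda>x. f x - g x)\<bar>"
    using bounded[OF assms(1)] bounded[OF assms(2)] by simp
  also have "\<dots> \<le> measure_pmf.expectation p (\<lambda>x. \<bar>f x - g x\<bar>)"
    by (rule integral_abs_bound)
  also have "(\<lambda>x. \<bar>f x - g x\<bar>) = indicator {x. f x \<noteq> g x}"
  proof
    fix x show "\<bar>f x - g x\<bar> = indicator {x. f x \<noteq> g x} x"
      using assms[of x] by (auto simp: indicator_def)
  qed
  finally show ?thesis by simp
qed

definition linear_form :: "nat \<Rightarrow> nat \<Rightarrow> (nat \<Rightarrow> nat \<Rightarrow> real) \<Rightarrow> (nat \<Rightarrow> nat \<Rightarrow> bool) \<Rightarrow> real" where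
  "linear_form k R w y = (\<Sum>i<k. \<Sum>j<R. w i j * of_bool (y i j))"

lemma halfspace_eq_linear_form: "halfspace k R w \<theta> y = sgn01 (linear_form k R w y - \<theta>)"
  by (simp add: halfspace_def linear_form_def of_bool_def)

lemma linear_form_truncate_diff:
  assumes "r < k"
  shows "linear_form k R w y - linear_form k R (w(r := truncate (w r) B)) y
           = (\<Sum>j\<in>{..<R} - B. w r j * of_bool (y r j))"
proof -
  let ?w' = "w(r := truncate (w r) B)"
  have "linear_form k R w y - linear_form k R ?w' y
          = (\<Sum>i<k. \<Sum>j<R. (w i j - ?w' i j) * of_bool (y i j))"
    by (simp add: linear_form_def left_diff_distrib sum_subtractf)
  also have "\<dots> = (\<Sum>j<R. (w r j - ?w' r j) * of_bool (y r j))"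
    using assms by (subst sum.mono_neutral_right[of "{..<k}" "{r}"]) auto
  also have "\<dots> = (\<Sum>j<R. if j \<in> B then 0 else w r j * of_bool (y r j))"
    by (intro sum.cong) (auto simp: truncate_def)
  also have "\<dots> = (\<Sum>j\<in>{..<R} - B. w r j * of_bool (y r j))"
    by (simp add: sum.If_cases Diff_eq)
  finally show ?thesis .
qed

lemma truncation_disagreement_margin:
  assumes "r < k"
    and "halfspace k R (w(r := truncate (w r) B)) \<theta> y \<noteq> halfspace k R w \<theta> y"
  shows "\<bar>linear_form k R (w(r := truncate (w r) B)) y - \<theta>\<bar> \<le> (\<Sum>j\<in>{..<R} - B. \<bar>w r j\<bar>)"
proof -
  let ?w' = "w(r := truncate (w r) B)"
  have "\<bar>linear_form k R w y - linear_form k R ?w' y\<bar> \<le> (\<Sum>j\<in>{..<R} - B. \<bar>w r j * of_bool (y r j)\<bar>)"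
    unfolding linear_form_truncate_diff[OF assms(1)] by (rule sum_abs)
  also have "\<dots> \<le> (\<Sum>j\<in>{..<R} - B. \<bar>w r j\<bar>)"
    by (intro sum_mono) (simp add: abs_mult)
  finally have "\<bar>linear_form k R w y - linear_form k R ?w' y\<bar> \<le> (\<Sum>j\<in>{..<R} - B. \<bar>w r j\<bar>)" .
  moreover have "(linear_form k R ?w' y - \<theta> \<ge> 0) \<noteq> (linear_form k R w y - \<theta> \<ge> 0)"
    using assms(2) by (auto simp: halfspace_eq_linear_form sgn01_def split: if_splits)
  ultimately show ?thesis by linarith
qed

lemma linear_form_diff_supported:
  assumes L_box: "L \<subseteq> {..<k} \<times> {..<R}" and agree: "\<forall>i j. (i, j) \<notin> L \<longrightarrow> y1 i j = y2 i j"
  shows "linear_form k R v y1 - linear_form k R v y2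
           = (\<Sum>(i, j)\<in>L. v i j * (of_bool (y1 i j) - of_bool (y2 i j)))"
proof -
  have "linear_form k R v y1 - linear_form k R v y2
          = (\<Sum>i<k. \<Sum>j<R. v i j * (of_bool (y1 i j) - of_bool (y2 i j)))"
    unfolding linear_form_def by (simp only: right_diff_distrib sum_subtractf)
  also have "\<dots> = (\<Sum>(i, j)\<in>{..<k} \<times> {..<R}. v i j * (of_bool (y1 i j) - of_bool (y2 i j)))"
    by (rule sum.cartesian_product)
  also have "\<dots> = (\<Sum>(i, j)\<in>L. v i j * (of_bool (y1 i j) - of_bool (y2 i j)))"
    using L_box agree by (intro sum.mono_neutral_right) auto
  finally show ?thesis .
qed

lemma superdecreasing_signs_vanish:
  fixes a \<delta> :: "nat \<Rightarrow> real"
  assumes dominates: "\<And>j. j < M \<Longrightarrow> (\<Sum>l\<in>{j<..<M}. \<bar>a l\<bar>) + D < \<bar>a j\<bar>"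
    and signs: "\<And>j. j < M \<Longrightarrow> \<delta> j \<in> {-1, 0, 1}"
    and small: "\<bar>\<Sum>j<M. a j * \<delta> j\<bar> \<le> D"
  shows "\<forall>j<M. \<delta> j = 0"
proof (rule ccontr)
  assume "\<not> (\<forall>j<M. \<delta> j = 0)"
  then obtain j0 where j0: "j0 < M" "\<delta> j0 \<noteq> 0" and before: "\<And>j. j < j0 \<Longrightarrow> \<delta> j = 0"
    using exists_least_iff[of "\<lambda>j. j < M \<and> \<delta> j \<noteq> 0"] by (metis order.strict_trans)
  have split: "{..<M} = {..<j0} \<union> insert j0 {j0<..<M}" using j0 by auto
  have "(\<Sum>j<M. a j * \<delta> j) = (\<Sum>j<j0. a j * \<delta> j) + (a j0 * \<delta> j0 + (\<Sum>j\<in>{j0<..<M}. a j * \<delta> j))"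
    by (subst split, subst sum.union_disjoint) auto
  hence "(\<Sum>j<M. a j * \<delta> j) = a j0 * \<delta> j0 + (\<Sum>j\<in>{j0<..<M}. a j * \<delta> j)"
    using before by simp
  moreover have "\<bar>a j0 * \<delta> j0\<bar> = \<bar>a j0\<bar>" using signs[OF j0(1)] j0(2) by (auto simp: abs_mult)
  moreover have "\<bar>\<Sum>j\<in>{j0<..<M}. a j * \<delta> j\<bar> \<le> (\<Sum>j\<in>{j0<..<M}. \<bar>a j\<bar>)"
  proof -
    have "\<bar>a j * \<delta> j\<bar> \<le> \<bar>a j\<bar>" if "j < M" for j
      using signs[OF that] by (auto simp: abs_mult)
    hence "(\<Sum>j\<in>{j0<..<M}. \<bar>a j * \<delta> j\<bar>) \<le> (\<Sum>j\<in>{j0<..<M}. \<bar>a j\<bar>)"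
      by (intro sum_mono) auto
    thus ?thesis by (rule order_trans[OF sum_abs])
  qed
  ultimately show False using dominates[OF j0(1)] small by linarith
qed

lemma truncation_disagreement_determined:
  fixes p :: "nat \<Rightarrow> nat" and r M :: nat and w :: "nat \<Rightarrow> nat \<Rightarrow> real" and B :: "nat set"
  defines "L \<equiv> (\<lambda>j. (r, p j)) ` {..<M}" and "w' \<equiv> w(r := truncate (w r) B)"
  assumes rk: "r < k" and inj: "inj_on p {..<M}"
    and p_in: "\<And>j. j < M \<Longrightarrow> p j \<in> B \<and> p j < R"
    and dominates: "\<And>j. j < M \<Longrightarrow>
          (\<Sum>l\<in>{j<..<M}. \<bar>w r (p l)\<bar>) + 2 * (\<Sum>i\<in>{..<R} - B. \<bar>w r i\<bar>) < \<bar>w r (p j)\<bar>"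
    and disagree1: "halfspace k R w' \<theta> y1 \<noteq> halfspace k R w \<theta> y1"
    and disagree2: "halfspace k R w' \<theta> y2 \<noteq> halfspace k R w \<theta> y2"
    and agree: "\<forall>i j. (i, j) \<notin> L \<longrightarrow> y1 i j = y2 i j"
    and "(i, j) \<in> L"
  shows "y1 i j = y2 i j"
proof -
  define \<delta> where "\<delta> l = (of_bool (y1 r (p l)) - of_bool (y2 r (p l)) :: real)" for l
  define \<Delta> where "\<Delta> = (\<Sum>i\<in>{..<R} - B. \<bar>w r i\<bar>)"
  have L_box: "L \<subseteq> {..<k} \<times> {..<R}" using rk p_in by (auto simp: L_def)
  have inj_L: "inj_on (\<lambda>j. (r, p j)) {..<M}" using inj by (auto simp: inj_on_def)
  have "linear_form k R w' y1 - linear_form k R w' y2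
          = (\<Sum>(i, j)\<in>L. w' i j * (of_bool (y1 i j) - of_bool (y2 i j)))"
    by (rule linear_form_diff_supported[OF L_box agree])
  also have "\<dots> = (\<Sum>l<M. w' r (p l) * \<delta> l)"
    unfolding L_def by (simp add: sum.reindex[OF inj_L] \<delta>_def)
  also have "\<dots> = (\<Sum>l<M. w r (p l) * \<delta> l)"
    using p_in by (intro sum.cong) (auto simp: w'_def truncate_def)
  finally have "\<bar>\<Sum>l<M. w r (p l) * \<delta> l\<bar> \<le> 2 * \<Delta>"
    using truncation_disagreement_margin[OF rk disagree1[unfolded w'_def]]
      truncation_disagreement_margin[OF rk disagree2[unfolded w'_def]]
    unfolding w'_def \<Delta>_def by linarith
  then have "\<forall>l<M. \<delta> l = 0"
  proof (intro superdecreasing_signs_vanish[where a = "\<lambda>l. w r (p l)"])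
    show "(\<Sum>l\<in>{j<..<M}. \<bar>w r (p l)\<bar>) + 2 * \<Delta> < \<bar>w r (p j)\<bar>" if "j < M" for j
      using dominates[OF that] unfolding \<Delta>_def .
    show "\<delta> l \<in> {-1, 0, 1}" for l by (simp add: \<delta>_def)
  qed
  moreover obtain l where "l < M" "i = r" "j = p l" using \<open>(i, j) \<in> L\<close> by (auto simp: L_def)
  ultimately show ?thesis by (simp add: \<delta>_def of_bool_eq_iff)
qed

lemma idx_order_permutes:
  "distinct (idx_order n u)" "set (idx_order n u) = {..<n}" "length (idx_order n u) = n"
  by (auto simp: idx_order_def)

lemma sum_outside_Bset:
  assumes "T \<le> n"
  shows "(\<Sum>j\<in>{..<n} - Bset T n u. f j) = (\<Sum>m\<in>{T..<n}. f (idx_order n u ! m))"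
proof -
  let ?ord = "idx_order n u"
  have inj: "inj_on (nth ?ord) {..<n}"
    using idx_order_permutes by (intro inj_on_nth) auto
  have "{..<n} = nth ?ord ` {..<n}" "Bset T n u = nth ?ord ` {..<T}"
    using nth_image[of n ?ord] nth_image[of T ?ord] assms
    by (auto simp: Bset_def idx_order_permutes atLeast0LessThan)
  moreover have "nth ?ord ` ({..<n} - {..<T}) = nth ?ord ` {..<n} - nth ?ord ` {..<T}"
    by (rule inj_on_image_set_diff[OF inj]) (use assms in auto)
  moreover have "{..<n} - {..<T} = {T..<n}" by auto
  ultimately have "{..<n} - Bset T n u = nth ?ord ` {T..<n}" by simp
  moreover have "inj_on (nth ?ord) {T..<n}" using inj by (rule inj_on_subset) auto
  ultimately show ?thesis by (simp add: sum.reindex)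
qed

lemma idx_order_prefix_samples:
  assumes "inj_on q {..<M}" and "\<And>j. j < M \<Longrightarrow> q j < T" and "T \<le> n"
  shows "inj_on (\<lambda>j. idx_order n u ! q j) {..<M}"
    and "j < M \<Longrightarrow> idx_order n u ! q j \<in> Bset T n u \<and> idx_order n u ! q j < n"
proof -
  have q_lt: "q j < T" "q j < n" if "j < M" for j
    using assms(2,3) that by (auto intro: order.strict_trans2)
  show "inj_on (\<lambda>j. idx_order n u ! q j) {..<M}"
  proof (rule inj_onI)
    fix x y assume "x \<in> {..<M}" "y \<in> {..<M}" and same: "idx_order n u ! q x = idx_order n u ! q y"
    then have "q x < length (idx_order n u)" "q y < length (idx_order n u)"
      using q_lt(2) by (simp_all add: idx_order_permutes(3))
    then have "q x = q y" using same by (simp add: nth_eq_iff_index_eq[OF idx_order_permutes(1)])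
    then show "x = y" using inj_onD[OF assms(1)] \<open>x \<in> {..<M}\<close> \<open>y \<in> {..<M}\<close> by blast
  qed
  assume "j < M"
  then have "q j < length (take T (idx_order n u))" "q j < length (idx_order n u)"
    using q_lt assms(3) by (simp_all add: idx_order_permutes(3))
  then have "take T (idx_order n u) ! q j \<in> set (take T (idx_order n u))"
    and "idx_order n u ! q j \<in> set (idx_order n u)" by (simp_all only: nth_mem)
  then show "idx_order n u ! q j \<in> Bset T n u \<and> idx_order n u ! q j < n"
    using q_lt[OF \<open>j < M\<close>] by (simp add: Bset_def idx_order_permutes(2))
qed

definition tail_energy :: "(nat \<Rightarrow> real) \<Rightarrow> nat \<Rightarrow> nat \<Rightarrow> real" where
  "tail_energy a n q = (\<Sum>i\<in>{q..<n}. (a i)\<^sup>2)"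

lemma tail_energy_nonneg: "tail_energy a n q \<ge> 0"
  unfolding tail_energy_def by (intro sum_nonneg) auto

lemma tail_energy_antimono: "q \<le> q' \<Longrightarrow> tail_energy a n q' \<le> tail_energy a n q"
  unfolding tail_energy_def by (intro sum_mono2) auto

lemma Cset_card_gt_critical_prefix:
  assumes card_gt: "real (card (Cset \<tau> n u)) > t"
  shows "nat \<lceil>t\<rceil> \<le> n"
    and "m < nat \<lceil>t\<rceil> \<Longrightarrow>
           \<tau> * sqrt (tail_energy (\<lambda>i. u (idx_order n u ! i)) n m) < \<bar>u (idx_order n u ! m)\<bar>"
proof -
  have "card (Cset \<tau> n u) \<le> n"
    using card_length[of "take _ (idx_order n u)"] by (auto simp: Cset_def idx_order_permutes)
  then have "t < real n" using card_gt by linarith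
  then show T_le: "nat \<lceil>t\<rceil> \<le> n" by simp
  have before_critical: "nat \<lceil>t\<rceil> < c" if "crit_cond \<tau> n u c" for c
  proof -
    define c0 where "c0 = (LEAST m. crit_cond \<tau> n u m)"
    have "c0 \<le> c" "crit_cond \<tau> n u c0" using that unfolding c0_def by (auto intro: Least_le LeastI)
    hence "c0 \<in> {1..n}" "Cset \<tau> n u = set (take (c0 - 1) (idx_order n u))"
      using that by (auto simp: crit_cond_def Cset_def c0_def)
    hence "card (Cset \<tau> n u) = c0 - 1" by (auto simp: distinct_card idx_order_permutes min_def)
    hence "t < real (c0 - 1)" using card_gt by simp
    hence "nat \<lceil>t\<rceil> \<le> c0 - 1" by simp
    also have "c0 - 1 < c" using \<open>c0 \<le> c\<close> \<open>c0 \<in> {1..n}\<close> by auto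
    finally show ?thesis .
  qed
  assume m_lt: "m < nat \<lceil>t\<rceil>"
  then have "\<not> crit_cond \<tau> n u (m + 1)" using before_critical[of "m + 1"] by auto
  moreover have "m + 1 \<le> n" using m_lt T_le by linarith
  ultimately show "\<tau> * sqrt (tail_energy (\<lambda>i. u (idx_order n u ! i)) n m) < \<bar>u (idx_order n u ! m)\<bar>"
    by (simp add: crit_cond_def sigma_m_def tail_energy_def)
qed

lemma tail_energy_decay:
  assumes critical: "\<And>m. m < T \<Longrightarrow> \<tau> * sqrt (tail_energy a n m) < \<bar>a m\<bar>"
    and "T \<le> n" and "0 \<le> \<tau>" "\<tau> \<le> 1"
  shows "m + d \<le> T \<Longrightarrow> tail_energy a n (m + d) \<le> (1 - \<tau>\<^sup>2) ^ d * tail_energy a n m"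
proof (induction d)
  case (Suc d)
  define q where "q = m + d"
  have "q < T" using Suc.prems by (simp add: q_def)
  have peel: "tail_energy a n q = (a q)\<^sup>2 + tail_energy a n (Suc q)"
    using \<open>q < T\<close> assms(2) by (simp add: tail_energy_def sum.atLeast_Suc_lessThan)
  have "(\<tau> * sqrt (tail_energy a n q))\<^sup>2 \<le> (\<bar>a q\<bar>)\<^sup>2"
    using critical[OF \<open>q < T\<close>] assms(3) tail_energy_nonneg by (intro power_mono) auto
  hence "\<tau>\<^sup>2 * tail_energy a n q \<le> (a q)\<^sup>2"
    using tail_energy_nonneg by (simp add: power_mult_distrib)
  hence "tail_energy a n (Suc q) \<le> (1 - \<tau>\<^sup>2) * tail_energy a n q"
    using peel by (simp add: algebra_simps)
  also have "\<dots> \<le> (1 - \<tau>\<^sup>2) * ((1 - \<tau>\<^sup>2) ^ d * tail_energy a n m)"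
    using Suc assms(3,4) by (intro mult_left_mono) (auto simp: q_def power_le_one)
  finally show ?case by (simp add: q_def)
qed simp

lemma later_samples_small:
  assumes critical: "\<And>m. m < T \<Longrightarrow> \<tau> * sqrt (tail_energy a n m) < \<bar>a m\<bar>"
    and "T \<le> n" and "0 < \<tau>" "\<tau> \<le> 1" and few_samples: "real M * \<tau> \<le> 1/2"
    and block_decay: "(1 - \<tau>\<^sup>2) ^ Lb \<le> \<tau> ^ 4"
    and samples_in_prefix: "\<And>j. j < M \<Longrightarrow> j * Lb < T"
  shows "(\<Sum>l\<in>{j<..<M}. \<bar>a (l * Lb)\<bar>) \<le> \<tau> / 2 * sqrt (tail_energy a n (j * Lb))"
proof -
  let ?S = "tail_energy a n (j * Lb)"
  have later: "\<bar>a (l * Lb)\<bar> \<le> \<tau>\<^sup>2 * sqrt ?S" if "l \<in> {j<..<M}" for l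
  proof -
    have "l * Lb < n" using samples_in_prefix[of l] that assms(2) by auto
    then have "(a (l * Lb))\<^sup>2 \<le> tail_energy a n (l * Lb)"
      unfolding tail_energy_def by (intro member_le_sum) auto
    also have "\<dots> \<le> tail_energy a n (j * Lb + Lb)"
    proof (rule tail_energy_antimono)
      have "Suc j * Lb \<le> l * Lb" using that by (intro mult_le_mono1) auto
      then show "j * Lb + Lb \<le> l * Lb" by simp
    qed
    also have "\<dots> \<le> (1 - \<tau>\<^sup>2) ^ Lb * ?S"
      using that samples_in_prefix[of "Suc j"]
      by (intro tail_energy_decay[OF critical assms(2)]) (use assms(3,4) in auto)
    also have "\<dots> \<le> \<tau> ^ 4 * ?S" using block_decay tail_energy_nonneg by (rule mult_right_mono)
    also have "\<dots> = (\<tau>\<^sup>2 * sqrt ?S)\<^sup>2" using tail_energy_nonneg by (simp add: power_mult_distrib)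
    finally have "\<bar>a (l * Lb)\<bar> \<le> \<bar>\<tau>\<^sup>2 * sqrt ?S\<bar>" by (simp only: abs_le_square_iff)
    then show ?thesis using tail_energy_nonneg[of a n "j * Lb"] by (simp add: abs_mult)
  qed
  have "(\<Sum>l\<in>{j<..<M}. \<bar>a (l * Lb)\<bar>) \<le> real (card {j<..<M}) * (\<tau>\<^sup>2 * sqrt ?S)"
    using later by (intro sum_bounded_above) auto
  also have "\<dots> \<le> real M * (\<tau>\<^sup>2 * sqrt ?S)"
    using assms(3) tail_energy_nonneg by (intro mult_right_mono) auto
  also have "\<dots> = (real M * \<tau>) * (\<tau> * sqrt ?S)" by (simp add: power2_eq_square)
  also have "\<dots> \<le> 1/2 * (\<tau> * sqrt ?S)"
    using few_samples assms(3) tail_energy_nonneg by (intro mult_right_mono) auto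
  finally show ?thesis by simp
qed

text \<open>Cauchy-Schwarz and decay: the mass beyond position \<open>T\<close> is at most \<open>\<tau>/4\<close> times the root
  tail energy at any position \<open>q \<le> T\<close> sufficiently far before \<open>T\<close>.\<close>
lemma tail_mass_small:
  assumes critical: "\<And>m. m < T \<Longrightarrow> \<tau> * sqrt (tail_energy a n m) < \<bar>a m\<bar>"
    and "T \<le> n" and "0 < \<tau>" "\<tau> \<le> 1/16" and "q \<le> T"
    and tail_decay: "real n * (1 - \<tau>\<^sup>2) ^ (T - q) \<le> \<tau> ^ 3"
  shows "(\<Sum>m\<in>{T..<n}. \<bar>a m\<bar>) \<le> \<tau> / 4 * sqrt (tail_energy a n q)"
proof -
  let ?S = "tail_energy a n q"
  have "(\<Sum>m\<in>{T..<n}. \<bar>a m\<bar>)\<^sup>2 \<le> tail_energy a n T * real (card {T..<n})"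
    using sum_squared_le_sum_of_squares[of "\<lambda>m. \<bar>a m\<bar>" "{T..<n}"] by (simp add: tail_energy_def)
  also have "\<dots> \<le> ((1 - \<tau>\<^sup>2) ^ (T - q) * ?S) * real n"
  proof (rule mult_mono)
    show "tail_energy a n T \<le> (1 - \<tau>\<^sup>2) ^ (T - q) * ?S"
      using tail_energy_decay[OF critical assms(2), of q "T - q"] assms(3,4,5) by simp
    have "0 \<le> 1 - \<tau>\<^sup>2" using assms(3,4) by (simp add: power_le_one)
    then show "0 \<le> (1 - \<tau>\<^sup>2) ^ (T - q) * ?S" using tail_energy_nonneg by simp
  qed auto
  also have "\<dots> = (real n * (1 - \<tau>\<^sup>2) ^ (T - q)) * ?S" by simp
  also have "\<dots> \<le> \<tau> ^ 3 * ?S" using tail_decay tail_energy_nonneg by (rule mult_right_mono)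
  also have "\<dots> \<le> \<tau>\<^sup>2 / 16 * ?S"
    using assms(3,4) tail_energy_nonneg
    by (intro mult_right_mono) (simp_all add: power2_eq_square power3_eq_cube)
  also have "\<dots> = (\<tau> / 4 * sqrt ?S)\<^sup>2"
    using tail_energy_nonneg by (simp add: power_mult_distrib power_divide)
  finally show ?thesis
    by (rule power2_le_imp_le) (use assms(3) tail_energy_nonneg[of a n q] in simp)
qed

lemma sample_dominates:
  assumes critical: "\<And>m. m < T \<Longrightarrow> \<tau> * sqrt (tail_energy a n m) < \<bar>a m\<bar>"
    and "T \<le> n" and "0 < \<tau>" "\<tau> \<le> 1/16" and "real M * \<tau> \<le> 1/2"
    and "(1 - \<tau>\<^sup>2) ^ Lb \<le> \<tau> ^ 4"
    and samples_in_prefix: "\<And>j. j < M \<Longrightarrow> j * Lb < T"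
    and tail_decay: "\<And>j. j < M \<Longrightarrow> real n * (1 - \<tau>\<^sup>2) ^ (T - j * Lb) \<le> \<tau> ^ 3"
    and "j < M"
  shows "(\<Sum>l\<in>{j<..<M}. \<bar>a (l * Lb)\<bar>) + 2 * (\<Sum>m\<in>{T..<n}. \<bar>a m\<bar>) < \<bar>a (j * Lb)\<bar>"
  using later_samples_small[OF critical assms(2,3) _ assms(5,6) samples_in_prefix, of j]
    tail_mass_small[OF critical assms(2,3,4) _ tail_decay[OF \<open>j < M\<close>]]
    critical[OF samples_in_prefix[OF \<open>j < M\<close>]] samples_in_prefix[OF \<open>j < M\<close>] assms(4)
  by linarith

text \<open>The number \<open>M\<close> of samples and their spacing \<open>Lb\<close>, the two factors of the second summand of \<open>t\<close>.\<close>
definition num_samples :: "nat \<Rightarrow> nat" where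
  "num_samples k = nat \<lceil>4 * (real k)\<^sup>2 * ln (real k)\<rceil>"

definition sample_gap :: "nat \<Rightarrow> nat" where
  "sample_gap k = nat \<lceil>(4 / (tau_k k)\<^sup>2) * ln (1 / tau_k k)\<rceil>"

lemma one_minus_pow_le_exp:
  fixes x :: real
  assumes "0 \<le> x" "x \<le> 1"
  shows "(1 - x) ^ n \<le> exp (- (x * real n))"
proof -
  have "(1 - x) ^ n \<le> exp (- x) ^ n"
    using assms exp_ge_add_one_self[of "-x"] by (intro power_mono) auto
  also have "\<dots> = exp (- (x * real n))" by (simp add: exp_of_nat_mult[symmetric] mult.commute)
  finally show ?thesis .
qed

lemma exp_neg_mult_ln: "(k :: real) > 0 \<Longrightarrow> exp (- (real n * ln k)) = 1 / k ^ n"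
  by (simp add: exp_minus exp_of_nat_mult inverse_eq_divide)

lemma tau_k_facts:
  assumes "k \<ge> 2"
  shows "0 < tau_k k" and "tau_k k \<le> 1/16" and "ln (1 / tau_k k) = 7 * ln (real k)"
proof -
  have "real k ^ 7 \<ge> 2 ^ 7" using assms by (intro power_mono) auto
  then show "0 < tau_k k" "tau_k k \<le> 1/16" using assms by (auto simp: tau_k_def divide_simps)
  show "ln (1 / tau_k k) = 7 * ln (real k)" using assms by (simp add: tau_k_def ln_realpow)
qed

text \<open>The threshold \<open>t\<close> leaves room \<open>(21 ln k + ln R)/\<tau>\<^sup>2\<close> beyond the last sample.\<close>
lemma t_param_split:
  assumes "k \<ge> 2" "R \<ge> 1"
  shows "t_param k R = (21 * ln (real k) + ln (real R)) / (tau_k k)\<^sup>2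
                        + real (num_samples k) * real (sample_gap k)"
    and "0 < (21 * ln (real k) + ln (real R)) / (tau_k k)\<^sup>2"
proof -
  have "0 < ln (real k)" "0 \<le> ln (real R)" using assms by auto
  then show "0 < (21 * ln (real k) + ln (real R)) / (tau_k k)\<^sup>2"
    using tau_k_facts[OF assms(1)] by simp
  have "0 < 4 * (real k)\<^sup>2 * ln (real k)" "0 < (4 / (tau_k k)\<^sup>2) * ln (1 / tau_k k)"
    using \<open>0 < ln (real k)\<close> tau_k_facts[OF assms(1)] assms(1) by auto
  then show "t_param k R = (21 * ln (real k) + ln (real R)) / (tau_k k)\<^sup>2
                        + real (num_samples k) * real (sample_gap k)"
    using tau_k_facts(3)[OF assms(1)]
    by (simp add: t_param_def num_samples_def sample_gap_def)
qed

lemma sample_gap_pos: "k \<ge> 2 \<Longrightarrow> 0 < sample_gap k"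
  using tau_k_facts[of k] by (simp add: sample_gap_def)

lemma num_samples_tau_le:
  assumes "k \<ge> 2"
  shows "real (num_samples k) * tau_k k \<le> 1/2"
proof -
  have "real (num_samples k) \<le> 4 * (real k)\<^sup>2 * ln (real k) + 1"
    using assms by (simp add: num_samples_def)
  also have "\<dots> \<le> 4 * (real k)\<^sup>2 * (real k - 1) + 1"
    using ln_le_minus_one[of "real k"] assms by (intro add_right_mono mult_left_mono) auto
  also have "\<dots> \<le> 4 * real k ^ 3"
  proof -
    have "(real k)\<^sup>2 \<ge> 2\<^sup>2" using assms by (intro power_mono) auto
    then show ?thesis by (simp add: algebra_simps power2_eq_square power3_eq_cube)
  qed
  finally have "real (num_samples k) * tau_k k \<le> 4 * real k ^ 3 * tau_k k"
    using tau_k_facts(1)[OF assms] by (intro mult_right_mono) auto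
  also have "\<dots> = 4 / real k ^ 4" using assms by (simp add: tau_k_def field_simps)
  also have "\<dots> \<le> 1/2"
  proof -
    have "real k ^ 4 \<ge> 2 ^ 4" using assms by (intro power_mono) auto
    thus ?thesis by (simp add: divide_simps)
  qed
  finally show ?thesis .
qed

lemma sample_gap_decay:
  assumes "k \<ge> 2"
  shows "(1 - (tau_k k)\<^sup>2) ^ sample_gap k \<le> tau_k k ^ 4"
proof -
  let ?\<tau> = "tau_k k"
  have tau: "0 < ?\<tau>" "?\<tau> \<le> 1/16" "ln (1 / ?\<tau>) = 7 * ln (real k)" by (rule tau_k_facts[OF assms])+
  have "?\<tau>\<^sup>2 * ((4 / ?\<tau>\<^sup>2) * ln (1 / ?\<tau>)) \<le> ?\<tau>\<^sup>2 * real (sample_gap k)"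
    unfolding sample_gap_def by (intro mult_left_mono real_nat_ceiling_ge) auto
  hence "real 28 * ln (real k) \<le> ?\<tau>\<^sup>2 * real (sample_gap k)" using tau by simp
  have "(1 - ?\<tau>\<^sup>2) ^ sample_gap k \<le> exp (- (?\<tau>\<^sup>2 * real (sample_gap k)))"
    using tau by (intro one_minus_pow_le_exp) (auto simp: power_le_one)
  also have "\<dots> \<le> exp (- (real 28 * ln (real k)))"
    using \<open>real 28 * ln (real k) \<le> _\<close> by simp
  also have "\<dots> = 1 / real k ^ 28" by (rule exp_neg_mult_ln) (use assms in simp)
  also have "\<dots> = ?\<tau> ^ 4" by (simp add: tau_k_def power_divide flip: power_mult)
  finally show ?thesis .
qed

lemma samples_before_threshold:
  assumes "k \<ge> 2" "R \<ge> 1" and "j < num_samples k"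
  defines "T \<equiv> nat \<lceil>t_param k R\<rceil>"
  shows "j * sample_gap k < T"
    and "real R * (1 - (tau_k k)\<^sup>2) ^ (T - j * sample_gap k) \<le> tau_k k ^ 3"
proof -
  let ?\<tau> = "tau_k k" and ?A = "(21 * ln (real k) + ln (real R)) / (tau_k k)\<^sup>2"
  have tau: "0 < ?\<tau>" "?\<tau> \<le> 1/16" by (rule tau_k_facts[OF assms(1)])+
  have "real (j * sample_gap k) \<le> real (num_samples k) * real (sample_gap k)"
    using assms(3) by (simp add: mult_right_mono)
  moreover have "t_param k R \<le> real T" unfolding T_def by (rule real_nat_ceiling_ge)
  ultimately have gap: "?A \<le> real T - real (j * sample_gap k)"
    using t_param_split[OF assms(1,2)] by linarith
  then show "j * sample_gap k < T" using t_param_split(2)[OF assms(1,2)] by linarith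
  then have "?A \<le> real (T - j * sample_gap k)" using gap by simp
  then have "21 * ln (real k) + ln (real R) \<le> ?\<tau>\<^sup>2 * real (T - j * sample_gap k)"
    using tau by (simp add: field_simps)
  have "(1 - ?\<tau>\<^sup>2) ^ (T - j * sample_gap k) \<le> exp (- (?\<tau>\<^sup>2 * real (T - j * sample_gap k)))"
    using tau by (intro one_minus_pow_le_exp) (auto simp: power_le_one)
  also have "\<dots> \<le> exp (- (real 21 * ln (real k)) + - ln (real R))"
    using \<open>21 * ln (real k) + ln (real R) \<le> _\<close> by simp
  also have "\<dots> = (1 / real k ^ 21) * (1 / real R)"
    unfolding exp_add by (subst exp_neg_mult_ln) (use assms(1,2) in \<open>simp_all add: exp_minus inverse_eq_divide\<close>)
  finally have "real R * (1 - ?\<tau>\<^sup>2) ^ (T - j * sample_gap k) \<le> real R * ((1 / real k ^ 21) * (1 / real R))"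
    using assms(2) by (intro mult_left_mono) auto
  also have "\<dots> = ?\<tau> ^ 3" using assms(2) by (simp add: tau_k_def power_divide flip: power_mult)
  finally show "real R * (1 - ?\<tau>\<^sup>2) ^ (T - j * sample_gap k) \<le> ?\<tau> ^ 3" .
qed

lemma noise_over_samples:
  assumes "k \<ge> 2"
  shows "(1 - 1 / (2 * (real k)\<^sup>2)) ^ num_samples k \<le> 1 / (real k)\<^sup>2"
proof -
  have "(real k)\<^sup>2 \<ge> 2\<^sup>2" using assms by (intro power_mono) auto
  then have x: "0 \<le> 1 / (2 * (real k)\<^sup>2)" "1 / (2 * (real k)\<^sup>2) \<le> 1" by (simp_all add: divide_le_eq)
  have "1 / (2 * (real k)\<^sup>2) * (4 * (real k)\<^sup>2 * ln (real k)) \<le> 1 / (2 * (real k)\<^sup>2) * real (num_samples k)"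
    unfolding num_samples_def using x by (intro mult_left_mono real_nat_ceiling_ge) auto
  hence "real 2 * ln (real k) \<le> 1 / (2 * (real k)\<^sup>2) * real (num_samples k)" using assms by simp
  have "(1 - 1 / (2 * (real k)\<^sup>2)) ^ num_samples k
          \<le> exp (- (1 / (2 * (real k)\<^sup>2) * real (num_samples k)))"
    using x by (rule one_minus_pow_le_exp)
  also have "\<dots> \<le> exp (- (real 2 * ln (real k)))"
    using \<open>real 2 * ln (real k) \<le> _\<close> by simp
  also have "\<dots> = 1 / (real k)\<^sup>2" by (rule exp_neg_mult_ln) (use assms in simp)
  finally show ?thesis .
qed

text \<open>A large critical set yields \<open>M\<close> distinct super-decreasing coordinates inside \<open>B_T(w_r)\<close>:
  the positions \<open>0, Lb, 2Lb, ...\<close> of the sorted order.\<close>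
lemma dominating_samples:
  assumes "k \<ge> 2" and "R \<ge> 1" and "real (card (Cset (tau_k k) R u)) > t_param k R"
  defines "B \<equiv> Bset (nat \<lceil>t_param k R\<rceil>) R u" and "M \<equiv> num_samples k"
  obtains p where "inj_on p {..<M}" and "\<And>j. j < M \<Longrightarrow> p j \<in> B \<and> p j < R"
    and "\<And>j. j < M \<Longrightarrow> (\<Sum>l\<in>{j<..<M}. \<bar>u (p l)\<bar>) + 2 * (\<Sum>i\<in>{..<R} - B. \<bar>u i\<bar>) < \<bar>u (p j)\<bar>"
proof -
  define T where "T = nat \<lceil>t_param k R\<rceil>"
  define p where "p j = idx_order R u ! (j * sample_gap k)" for j
  have T_le: "T \<le> R"
    and critical: "\<And>m. m < T \<Longrightarrow>
           tau_k k * sqrt (tail_energy (\<lambda>i. u (idx_order R u ! i)) R m) < \<bar>u (idx_order R u ! m)\<bar>"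
    using Cset_card_gt_critical_prefix[OF assms(3)] by (auto simp: T_def)
  have in_prefix: "\<And>j. j < M \<Longrightarrow> j * sample_gap k < T"
    using samples_before_threshold(1)[OF assms(1,2)] by (simp add: M_def T_def)
  have "inj_on (\<lambda>j. j * sample_gap k) {..<M}"
    using sample_gap_pos[OF assms(1)] by (auto simp: inj_on_def)
  from idx_order_prefix_samples[where q = "\<lambda>j. j * sample_gap k" and u = u, OF this in_prefix T_le]
  have "inj_on p {..<M}" and "\<And>j. j < M \<Longrightarrow> p j \<in> B \<and> p j < R"
    unfolding p_def B_def T_def by blast+
  moreover have "(\<Sum>l\<in>{j<..<M}. \<bar>u (p l)\<bar>) + 2 * (\<Sum>i\<in>{..<R} - B. \<bar>u i\<bar>) < \<bar>u (p j)\<bar>"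
    if "j < M" for j
    using sample_dominates[OF critical T_le tau_k_facts(1,2)[OF assms(1)] num_samples_tau_le[OF assms(1)]
        sample_gap_decay[OF assms(1)] in_prefix[unfolded M_def]
        samples_before_threshold(2)[OF assms(1,2), folded T_def] that[unfolded M_def]]
    unfolding B_def T_def[symmetric] by (simp add: sum_outside_Bset[OF T_le] p_def M_def)
  ultimately show ?thesis using that by blast
qed

theorem lemma4p8:
  fixes k R r :: nat and D0 D1 :: "(nat \<Rightarrow> bool) pmf"
    and w :: "nat \<Rightarrow> nat \<Rightarrow> real" and \<theta> :: real and b :: bool
  assumes "k \<ge> 2" and "R \<ge> 1"
    and "set_pmf D0 \<subseteq> {x. \<forall>i\<ge>k. \<not> x i}"
    and "set_pmf D1 \<subseteq> {x. \<forall>i\<ge>k. \<not> x i}"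
    and "r < k"
    and "real (card (Cset (tau_k k) R (w r))) > t_param k R"
  shows "\<bar>measure_pmf.expectation (noisyD k R (if b then D1 else D0))
            (halfspace k R (w(r := truncate (w r) (Bset (nat \<lceil>t_param k R\<rceil>) R (w r)))) \<theta>)
          - measure_pmf.expectation (noisyD k R (if b then D1 else D0)) (halfspace k R w \<theta>)\<bar>
         \<le> 1 / (real k)\<^sup>2"
proof -
  define B where "B = Bset (nat \<lceil>t_param k R\<rceil>) R (w r)"
  define M where "M = num_samples k"
  define D where "D = noisyD k R (if b then D1 else D0)"
  define h' where "h' = halfspace k R (w(r := truncate (w r) B)) \<theta>"
  obtain p where p_inj: "inj_on p {..<M}" and p_in: "\<And>j. j < M \<Longrightarrow> p j \<in> B \<and> p j < R"
    and dominates: "\<And>j. j < M \<Longrightarrow>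
          (\<Sum>l\<in>{j<..<M}. \<bar>w r (p l)\<bar>) + 2 * (\<Sum>i\<in>{..<R} - B. \<bar>w r i\<bar>) < \<bar>w r (p j)\<bar>"
    using dominating_samples[OF assms(1,2,6)] unfolding B_def M_def by blast
  have "\<bar>measure_pmf.expectation D h' - measure_pmf.expectation D (halfspace k R w \<theta>)\<bar>
        \<le> measure D {y. h' y \<noteq> halfspace k R w \<theta> y}"
    by (rule expectation_diff_le_disagreement) (auto simp: h'_def halfspace_def sgn01_def)
  also have "\<dots> \<le> (1 - 1 / (2 * (real k)\<^sup>2)) ^ card ((\<lambda>j. (r, p j)) ` {..<M})"
    using assms(1,5) p_in
      truncation_disagreement_determined[where w = w and r = r and p = p, OF assms(5) p_inj p_in dominates]
    unfolding D_def by (intro measure_noisyD_le_if_determined) (auto simp: h'_def)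
  also have "card ((\<lambda>j. (r, p j)) ` {..<M}) = M"
    using p_inj by (simp add: card_image inj_on_def)
  also have "(1 - 1 / (2 * (real k)\<^sup>2)) ^ M \<le> 1 / (real k)\<^sup>2"
    unfolding M_def by (rule noise_over_samples[OF assms(1)])
  finally show ?thesis by (simp only: D_def h'_def B_def)
qed

end
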